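(* Let $B\subset\mathbb{R}^2$ be the open unit disk centered at $0$ and $\Lambda_p'=\inf_{u\in H_{as}\setminus\{0\}}\frac{\|\nabla u\|_2^2}{\|u\|_p^2}$ for $p\ge2$. Then $\Lambda_p'\to0$ as $p\to\infty$.
   Context: $H_{za}(B)=\{u\in H^1(B):\int_B u=0\}$. $H_{as}$ is the set of $u\in H_{za}(B)$ with $u(-x_1,x_2)=u(x_1,x_2)$ and $u(x_1,-x_2)=-u(x_1,x_2)$ for $(x_1,x_2)\in B$. *)

theory Defs
  imports "HOL-Analysis.Analysis"
begin

definition diskB :: "(real^2) set" where
  "diskB = ball 0 1"

definition partial :: "2 \<Rightarrow> (real^2 \<Rightarrow> real) \<Rightarrow> real^2 \<Rightarrow> real" where
  "partial i f x = deriv (\<lambda>t. f (x + t *\<^sub>R axis i 1)) 0"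

fun Ck :: "nat \<Rightarrow> (real^2 \<Rightarrow> real) \<Rightarrow> bool" where
  "Ck 0 f = continuous_on UNIV f"
| "Ck (Suc k) f = (continuous_on UNIV f \<and>
      (\<forall>i x. (\<lambda>t. f (x + t *\<^sub>R axis i 1)) differentiable (at 0)) \<and>
      (\<forall>i. Ck k (partial i f)))"

definition smooth_fun :: "(real^2 \<Rightarrow> real) \<Rightarrow> bool" where
  "smooth_fun f \<longleftrightarrow> (\<forall>k. Ck k f)"

definition test_fun :: "(real^2 \<Rightarrow> real) \<Rightarrow> bool" where
  "test_fun \<phi> \<longleftrightarrow> smooth_fun \<phi> \<and> compact (closure {x. \<phi> x \<noteq> 0})
                  \<and> closure {x. \<phi> x \<noteq> 0} \<subseteq> diskB"

definition L2B :: "(real^2 \<Rightarrow> real) \<Rightarrow> bool" where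
  "L2B f \<longleftrightarrow> f \<in> borel_measurable (lebesgue_on diskB)
             \<and> integrable (lebesgue_on diskB) (\<lambda>x. (f x)^2)"

definition weak_grad :: "(real^2 \<Rightarrow> real) \<Rightarrow> (2 \<Rightarrow> real^2 \<Rightarrow> real) \<Rightarrow> bool" where
  "weak_grad u g \<longleftrightarrow> (\<forall>i. L2B (g i)) \<and>
     (\<forall>\<phi> i. test_fun \<phi> \<longrightarrow>
        integral\<^sup>L (lebesgue_on diskB) (\<lambda>x. u x * partial i \<phi> x)
        = - integral\<^sup>L (lebesgue_on diskB) (\<lambda>x. g i x * \<phi> x))"

definition H1B :: "(real^2 \<Rightarrow> real) \<Rightarrow> bool" where
  "H1B u \<longleftrightarrow> L2B u \<and> (\<exists>g. weak_grad u g)"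

definition H_za :: "(real^2 \<Rightarrow> real) \<Rightarrow> bool" where
  "H_za u \<longleftrightarrow> H1B u \<and> integral\<^sup>L (lebesgue_on diskB) u = 0"

definition H_as :: "(real^2 \<Rightarrow> real) \<Rightarrow> bool" where
  "H_as u \<longleftrightarrow> H_za u \<and>
     (\<forall>x\<in>diskB. u (vector [- (x$1), x$2]) = u x \<and> u (vector [x$1, - (x$2)]) = - u x)"

definition Lambda' :: "real \<Rightarrow> real" where
  "Lambda' p = Inf {(integral\<^sup>L (lebesgue_on diskB) (\<lambda>x. (g 1 x)^2 + (g 2 x)^2))
                      / (integral\<^sup>L (lebesgue_on diskB) (\<lambda>x. \<bar>u x\<bar> powr p)) powr (2 / p)
                    | u g. H_as u \<and> weak_grad u g \<and> \<not> (AE x in lebesgue_on diskB. u x = 0)}"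

end

theory Submission
  imports Defs
begin

text \<open>The competitor is the regularised logarithmic potential of a dipole,
  \<open>u(x) = ln (|x - a|\<^sup>2 + \<epsilon>) - ln (|x - b|\<^sup>2 + \<epsilon>)\<close> with \<open>a, b = (0, \<mp>1/2)\<close>, which has the
  symmetries required in \<open>H_as\<close>. Its Dirichlet energy grows only like \<open>ln (1/\<epsilon>)\<close>: for
  \<open>1/\<epsilon> \<le> 4\<^sup>N\<close>, the weight \<open>1 / (|x - c|\<^sup>2 + \<epsilon>)\<close> is dominated near \<open>c\<close> by the sum over \<open>j \<le> N\<close>
  of \<open>4\<^sup>j\<close> times the indicator of the ball of radius \<open>2/2\<^sup>j\<close>, and each term has integral \<open>4\<pi>\<close>.
  On the other hand \<open>u \<ge> ln (1/(8\<epsilon>))\<close> on the disk of radius \<open>\<surd>\<epsilon>\<close> around \<open>b\<close>, so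
  \<open>\<parallel>u\<parallel>\<^sub>p\<^sup>2 \<ge> ln (1/(8\<epsilon>))\<^sup>2 (\<pi>\<epsilon>)\<^bsup>2/p\<^esup>\<close>. For \<open>\<epsilon> = 4\<^sup>-\<^sup>N\<close> with \<open>N = \<lceil>p\<rceil>\<close> the last factor is
  at least \<open>1/256\<close>, and the Rayleigh quotient is \<open>O(N / N\<^sup>2) = O(1/p)\<close>.\<close>

lemma integral_UNIV_eq_if_vanishing:
  fixes f :: "'a::euclidean_space \<Rightarrow> 'b::banach"
  assumes "\<And>x. x \<notin> S \<Longrightarrow> f x = 0"
  shows "integral UNIV f = integral S f"
proof -
  have "(\<lambda>x. if x \<in> S then f x else 0) = f" using assms by auto
  then show ?thesis using integral_restrict_UNIV[of S f] by simp
qed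

lemma integral_translate_UNIV:
  fixes F :: "'a::euclidean_space \<Rightarrow> 'b::banach"
  assumes "bounded K" and "\<And>x. x \<notin> K \<Longrightarrow> F x = 0"
  shows "integral UNIV (\<lambda>x. F (x + c)) = integral UNIV F"
proof -
  obtain a where K: "K \<subseteq> cbox (-a) a" using bounded_subset_cbox_symmetric[OF assms(1)] .
  have "integral UNIV (\<lambda>x. F (x + c)) = integral (cbox (-a - c) (a - c)) (\<lambda>x. F (x + c))"
  proof (rule integral_UNIV_eq_if_vanishing)
    fix x assume "x \<notin> cbox (-a - c) (a - c)"
    then have "x + c \<notin> cbox (-a) a"
      by (fastforce simp: mem_box inner_diff_left inner_add_left)
    then show "F (x + c) = 0" using K assms(2) by blast
  qed
  also have "\<dots> = integral (cbox (-a) a) F" by (rule integral_shift_cbox)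
  also have "\<dots> = integral UNIV F"
    by (rule integral_UNIV_eq_if_vanishing[symmetric]) (use K assms(2) in blast)
  finally show ?thesis .
qed

lemma integral_translate_has_real_derivative:
  fixes F F' :: "'a::euclidean_space \<Rightarrow> real"
  assumes cF: "continuous_on UNIV F" and cF': "continuous_on UNIV F'"
    and D: "\<And>x. ((\<lambda>t. F (x + t *\<^sub>R e)) has_real_derivative F' x) (at 0)"
  shows "((\<lambda>s. integral (cbox a b) (\<lambda>x. F (x + s *\<^sub>R e))) has_real_derivative
    integral (cbox a b) F') (at 0)"
proof -
  have shifted_deriv: "((\<lambda>s. F (x + s *\<^sub>R e)) has_real_derivative F' (x + s *\<^sub>R e)) (at s)" for x s
  proof -
    have "(\<lambda>t. F ((x + s *\<^sub>R e) + t *\<^sub>R e)) = (\<lambda>t. F (x + (t + s) *\<^sub>R e))"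
      by (simp add: algebra_simps)
    then show ?thesis using D[of "x + s *\<^sub>R e"] DERIV_shift[of "\<lambda>r. F (x + r *\<^sub>R e)" _ 0 s] by simp
  qed
  have "((\<lambda>s. integral (cbox a b) (\<lambda>x. F (x + s *\<^sub>R e))) has_field_derivative
      integral (cbox a b) (\<lambda>x. F' (x + 0 *\<^sub>R e))) (at 0 within UNIV)"
  proof (rule leibniz_rule_field_derivative[where fx="\<lambda>s x. F' (x + s *\<^sub>R e)"])
    show "(\<lambda>x. F (x + s *\<^sub>R e)) integrable_on cbox a b" for s
      by (intro integrable_continuous continuous_on_compose2[OF cF] continuous_intros) auto
    show "continuous_on (UNIV \<times> cbox a b) (\<lambda>(s, x). F' (x + s *\<^sub>R e))"
      unfolding case_prod_unfold by (intro continuous_on_compose2[OF cF'] continuous_intros) auto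
  qed (auto intro: shifted_deriv)
  then show ?thesis by simp
qed

text \<open>The integral of \<open>F (x + s e)\<close> over a large box is independent of \<open>s\<close> for \<open>|s| \<le> 1\<close>, and its
  derivative at \<open>s = 0\<close> is the integral of \<open>F'\<close>.\<close>
lemma integral_directional_derivative_eq_0:
  fixes F F' :: "'a::euclidean_space \<Rightarrow> real"
  assumes K: "compact K" and F0: "\<And>x. x \<notin> K \<Longrightarrow> F x = 0" and F'0: "\<And>x. x \<notin> K \<Longrightarrow> F' x = 0"
    and cF: "continuous_on UNIV F" and cF': "continuous_on UNIV F'"
    and D: "\<And>x. ((\<lambda>t. F (x + t *\<^sub>R e)) has_real_derivative F' x) (at 0)"
  shows "integral UNIV F' = 0"
proof -
  obtain c where c: "\<forall>x\<in>K. norm x \<le> c" using compact_imp_bounded[OF K] by (auto simp: bounded_iff)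
  obtain a where a: "cball (0::'a) (c + norm e) \<subseteq> cbox (-a) a"
    using bounded_subset_cbox_symmetric[OF bounded_cball] .
  have vanish: "F (x + s *\<^sub>R e) = 0" if "\<bar>s\<bar> \<le> 1" "x \<notin> cbox (-a) a" for x s
  proof (rule F0, rule notI)
    assume "x + s *\<^sub>R e \<in> K"
    then have "norm (x + s *\<^sub>R e) \<le> c" using c by blast
    moreover have "norm (s *\<^sub>R e) \<le> norm e" using that(1) by (simp add: mult_left_le_one_le)
    ultimately have "norm x \<le> c + norm e" using norm_triangle_ineq4[of "x + s *\<^sub>R e" "s *\<^sub>R e"] by simp
    then show False using a that(2) by (auto simp: subset_iff)
  qed
  have const: "integral (cbox (-a) a) (\<lambda>x. F (x + s *\<^sub>R e)) = integral UNIV F" if "\<bar>s\<bar> \<le> 1" for s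
  proof -
    have "integral (cbox (-a) a) (\<lambda>x. F (x + s *\<^sub>R e)) = integral UNIV (\<lambda>x. F (x + s *\<^sub>R e))"
      by (rule integral_UNIV_eq_if_vanishing[symmetric]) (use vanish that in auto)
    also have "\<dots> = integral UNIV F"
      by (rule integral_translate_UNIV[OF compact_imp_bounded[OF K] F0])
    finally show ?thesis .
  qed
  have "((\<lambda>s. integral UNIV F) has_real_derivative integral (cbox (-a) a) F') (at 0)"
    by (rule has_field_derivative_transform_within[where d=1,
          OF integral_translate_has_real_derivative[OF cF cF' D]]) (use const in auto)
  then have "integral (cbox (-a) a) F' = 0" using DERIV_const DERIV_unique by metis
  moreover have "F' x = 0" if "x \<notin> cbox (-a) a" for x
  proof (rule F'0, rule notI)
    assume "x \<in> K"
    then have "x \<in> cball 0 (c + norm e)" using c by (auto intro: order_trans)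
    then show False using a that by blast
  qed
  ultimately show ?thesis using integral_UNIV_eq_if_vanishing by metis
qed

lemma diskB_sets: "diskB \<in> sets lebesgue"
  unfolding diskB_def by (metis fmeasurableD lmeasurable_ball)

lemma diskB_subset_cbox: "diskB \<subseteq> cbox (-1) 1"
proof
  fix x :: "real^2" assume "x \<in> diskB"
  then have "\<bar>x$i\<bar> \<le> 1" for i
    using component_le_norm_cart[of x i] by (simp add: diskB_def)
  then show "x \<in> cbox (-1) 1" by (auto simp: mem_box_cart abs_le_iff)
qed

lemma integrable_diskB_continuous:
  fixes f :: "real^2 \<Rightarrow> real"
  assumes "continuous_on UNIV f"
  shows "integrable (lebesgue_on diskB) f"
proof -
  have "f absolutely_integrable_on cbox (-1) 1"
    using assms by (intro absolutely_integrable_continuous continuous_on_subset[OF assms]) auto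
  then have "f absolutely_integrable_on diskB"
    using set_integrable_subset diskB_sets diskB_subset_cbox by blast
  then show ?thesis
    using diskB_sets by (simp add: integrable_restrict_space set_integrable_def)
qed

lemma integral_diskB_continuous:
  fixes f :: "real^2 \<Rightarrow> real"
  assumes "continuous_on UNIV f"
  shows "integral\<^sup>L (lebesgue_on diskB) f = integral diskB f"
  by (rule lebesgue_integral_eq_integral[OF integrable_diskB_continuous[OF assms] diskB_sets])

lemma L2B_continuous:
  fixes f :: "real^2 \<Rightarrow> real"
  assumes "continuous_on UNIV f"
  shows "L2B f"
  unfolding L2B_def
proof
  show "f \<in> borel_measurable (lebesgue_on diskB)"
    using continuous_on_subset[OF assms] diskB_sets
    by (blast intro: continuous_imp_measurable_on_sets_lebesgue)
  show "integrable (lebesgue_on diskB) (\<lambda>x. (f x)\<^sup>2)"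
    by (intro integrable_diskB_continuous continuous_intros assms)
qed

lemma integral_diskB_odd:
  fixes f :: "real^2 \<Rightarrow> real"
  assumes "continuous_on UNIV f" and odd: "\<And>x. f (- x) = - f x"
  shows "integral\<^sup>L (lebesgue_on diskB) f = 0"
proof -
  define V where "V x = (if x \<in> diskB then f x else 0)" for x
  have odd_V: "V (- x) = - V x" for x
    by (simp add: V_def diskB_def odd)
  have "integral\<^sup>L (lebesgue_on diskB) f = integral UNIV V"
    unfolding V_def integral_diskB_continuous[OF assms(1)] by (simp add: integral_restrict_UNIV)
  also have "\<dots> = integral (cbox (-1) 1) V"
    by (rule integral_UNIV_eq_if_vanishing) (use diskB_subset_cbox in \<open>auto simp: V_def\<close>)
  finally have I: "integral\<^sup>L (lebesgue_on diskB) f = integral (cbox (-1) 1) V" .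
  have "integral (cbox (-1) 1) V = integral (cbox (- 1) (- (- 1))) (\<lambda>x. V (- x))"
    by (rule integral_reflect[symmetric])
  also have "\<dots> = - integral (cbox (-1) 1) V"
    by (simp add: odd_V)
  finally show ?thesis using I by simp
qed

lemma partial_eq_0_outside_support:
  assumes "x \<notin> closure {x. f x \<noteq> 0}"
  shows "partial i f x = 0"
proof -
  obtain d where d: "d > 0" "ball x d \<subseteq> - closure {x. f x \<noteq> 0}"
    using assms open_contains_ball[of "- closure {x. f x \<noteq> 0}"] by auto
  have "f y = 0" if "y \<in> ball x d" for y
    using d(2) that closure_subset[of "{x. f x \<noteq> 0}"] by blast
  then have "\<forall>\<^sub>F t in nhds 0. f (x + t *\<^sub>R axis i 1) = 0"
    unfolding eventually_nhds_metric using d(1) by (auto simp: dist_norm)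
  then show ?thesis
    unfolding partial_def by (simp add: deriv_cong_ev[of _ "\<lambda>_. 0"])
qed

lemma test_fun_C1:
  assumes "test_fun \<phi>"
  shows "continuous_on UNIV \<phi>" and "continuous_on UNIV (partial i \<phi>)"
    and "((\<lambda>t. \<phi> (x + t *\<^sub>R axis i 1)) has_real_derivative partial i \<phi> x) (at 0)"
proof -
  have "Ck (Suc 0) \<phi>" using assms unfolding test_fun_def smooth_fun_def by blast
  then show "continuous_on UNIV \<phi>" "continuous_on UNIV (partial i \<phi>)"
    and "((\<lambda>t. \<phi> (x + t *\<^sub>R axis i 1)) has_real_derivative partial i \<phi> x) (at 0)"
    by (auto simp: partial_def DERIV_deriv_iff_real_differentiable)
qed

text \<open>Integrate the derivative of \<open>u \<phi>\<close> along a coordinate direction.\<close>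
lemma weak_grad_C1:
  fixes u :: "real^2 \<Rightarrow> real" and G :: "2 \<Rightarrow> real^2 \<Rightarrow> real"
  assumes cu: "continuous_on UNIV u" and cG: "\<And>i. continuous_on UNIV (G i)"
    and Du: "\<And>i x. ((\<lambda>t. u (x + t *\<^sub>R axis i 1)) has_real_derivative G i x) (at 0)"
  shows "weak_grad u G"
  unfolding weak_grad_def
proof (intro conjI allI impI)
  show "L2B (G i)" for i by (rule L2B_continuous[OF cG])
  fix \<phi> i assume tf: "test_fun \<phi>"
  define K where "K = closure {x. \<phi> x \<noteq> 0}"
  have K: "compact K" "K \<subseteq> diskB" using tf unfolding test_fun_def K_def by auto
  note cphi = test_fun_C1(1)[OF tf] and cdphi = test_fun_C1(2)[OF tf, of i]
    and Dphi = test_fun_C1(3)[OF tf, of _ i]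
  have vanish: "\<phi> x = 0" "partial i \<phi> x = 0" if "x \<notin> K" for x
    using that closure_subset[of "{x. \<phi> x \<noteq> 0}"] partial_eq_0_outside_support[of x \<phi> i]
    unfolding K_def by auto
  define F' where "F' x = G i x * \<phi> x + u x * partial i \<phi> x" for x
  have "integral UNIV F' = 0"
  proof (rule integral_directional_derivative_eq_0[OF K(1), of "\<lambda>x. u x * \<phi> x"])
    show "continuous_on UNIV (\<lambda>x. u x * \<phi> x)" by (intro continuous_intros cu cphi)
    show "continuous_on UNIV F'" unfolding F'_def by (intro continuous_intros cG cu cphi cdphi)
    show "((\<lambda>t. u (x + t *\<^sub>R axis i 1) * \<phi> (x + t *\<^sub>R axis i 1)) has_real_derivative F' x) (at 0)" for x
      using DERIV_mult[OF Du Dphi] by (simp add: F'_def algebra_simps)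
  qed (use vanish in \<open>auto simp: F'_def\<close>)
  moreover have "integral UNIV F' = integral diskB F'"
    by (rule integral_UNIV_eq_if_vanishing) (use K(2) vanish in \<open>force simp: F'_def\<close>)
  moreover have c1: "continuous_on UNIV (\<lambda>x. G i x * \<phi> x)"
    and c2: "continuous_on UNIV (\<lambda>x. u x * partial i \<phi> x)"
    by (intro continuous_intros cG cu cphi cdphi)+
  ultimately have "integral diskB (\<lambda>x. G i x * \<phi> x) + integral diskB (\<lambda>x. u x * partial i \<phi> x) = 0"
    unfolding F'_def
    by (subst integral_add[symmetric])
      (auto intro!: integrable_on_lebesgue_on diskB_sets integrable_diskB_continuous)
  then show "integral\<^sup>L (lebesgue_on diskB) (\<lambda>x. u x * partial i \<phi> x) =
        - integral\<^sup>L (lebesgue_on diskB) (\<lambda>x. G i x * \<phi> x)"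
    unfolding integral_diskB_continuous[OF c1] integral_diskB_continuous[OF c2] by linarith
qed

definition reg_sqdist :: "real \<Rightarrow> 'a::real_inner \<Rightarrow> 'a \<Rightarrow> real" where
  "reg_sqdist \<epsilon> c x = (norm (x - c))\<^sup>2 + \<epsilon>"

lemma reg_sqdist_pos: "\<epsilon> > 0 \<Longrightarrow> reg_sqdist \<epsilon> c x > 0"
  unfolding reg_sqdist_def by (simp add: add_nonneg_pos)

lemma reg_sqdist_neq_0: "\<epsilon> > 0 \<Longrightarrow> reg_sqdist \<epsilon> c x \<noteq> 0"
  using reg_sqdist_pos by (metis less_irrefl)

lemma continuous_on_reg_sqdist [continuous_intros]: "continuous_on S (reg_sqdist \<epsilon> c)"
  unfolding reg_sqdist_def by (intro continuous_intros)

lemma reg_sqdist_has_real_derivative: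
  "((\<lambda>t. reg_sqdist \<epsilon> c (x + t *\<^sub>R e)) has_real_derivative 2 * ((x - c) \<bullet> e)) (at 0)"
proof -
  have "reg_sqdist \<epsilon> c (x + t *\<^sub>R e) = (x - c) \<bullet> (x - c) + 2 * t * ((x - c) \<bullet> e) + t\<^sup>2 * (e \<bullet> e) + \<epsilon>"
    for t
    unfolding reg_sqdist_def power2_norm_eq_inner
    by (simp add: inner_add_left inner_add_right inner_diff_left inner_diff_right inner_commute
        algebra_simps power2_eq_square)
  moreover have "((\<lambda>t. (x - c) \<bullet> (x - c) + 2 * t * ((x - c) \<bullet> e) + t\<^sup>2 * (e \<bullet> e) + \<epsilon>)
      has_real_derivative 2 * ((x - c) \<bullet> e)) (at 0)"
    by (auto intro!: derivative_eq_intros)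
  ultimately show ?thesis by simp
qed

lemma power2_norm_vec2: "(norm (z::real^2))\<^sup>2 = (z$1)\<^sup>2 + (z$2)\<^sup>2"
  unfolding power2_norm_eq_inner by (simp add: inner_vec_def sum_2 power2_eq_square)

definition pole_minus :: "real^2" where "pole_minus = axis 2 (-1/2)"
definition pole_plus :: "real^2" where "pole_plus = axis 2 (1/2)"

lemma pole_minus_eq_uminus_pole_plus: "pole_minus = - pole_plus"
  by (simp add: vec_eq_iff pole_minus_def pole_plus_def axis_def)

lemma norm_pole_plus: "norm pole_plus = 1/2"
proof -
  have "(norm pole_plus)\<^sup>2 = (1/2)\<^sup>2"
    by (simp add: power2_norm_vec2 pole_plus_def axis_def)
  then show ?thesis by (simp add: power2_eq_iff_nonneg)
qed

lemma dist_poles: "dist pole_plus pole_minus = 1"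
proof -
  have "pole_plus - pole_minus = 2 *\<^sub>R pole_plus" by (simp add: pole_minus_eq_uminus_pole_plus scaleR_2)
  then show ?thesis by (simp add: dist_norm norm_pole_plus)
qed

definition dipole :: "real \<Rightarrow> real^2 \<Rightarrow> real" where
  "dipole \<epsilon> x = ln (reg_sqdist \<epsilon> pole_minus x) - ln (reg_sqdist \<epsilon> pole_plus x)"

definition dipole_grad :: "real \<Rightarrow> 2 \<Rightarrow> real^2 \<Rightarrow> real" where
  "dipole_grad \<epsilon> i x = ((2 / reg_sqdist \<epsilon> pole_minus x) *\<^sub>R (x - pole_minus)
                        - (2 / reg_sqdist \<epsilon> pole_plus x) *\<^sub>R (x - pole_plus)) $ i"

lemma continuous_on_dipole: "\<epsilon> > 0 \<Longrightarrow> continuous_on UNIV (dipole \<epsilon>)"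
  unfolding dipole_def by (intro continuous_intros) (simp_all add: reg_sqdist_pos reg_sqdist_neq_0)

lemma continuous_on_dipole_grad: "\<epsilon> > 0 \<Longrightarrow> continuous_on UNIV (dipole_grad \<epsilon> i)"
  unfolding dipole_grad_def by (intro continuous_intros) (simp_all add: reg_sqdist_neq_0)

lemma dipole_has_real_derivative:
  assumes "\<epsilon> > 0"
  shows "((\<lambda>t. dipole \<epsilon> (x + t *\<^sub>R axis i 1)) has_real_derivative dipole_grad \<epsilon> i x) (at 0)"
proof -
  let ?e = "axis i (1::real)"
  have "((\<lambda>t. ln (reg_sqdist \<epsilon> pole_minus (x + t *\<^sub>R ?e)) - ln (reg_sqdist \<epsilon> pole_plus (x + t *\<^sub>R ?e)))
      has_real_derivative (1 / reg_sqdist \<epsilon> pole_minus (x + 0 *\<^sub>R ?e)) * (2 * ((x - pole_minus) \<bullet> ?e))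
        - (1 / reg_sqdist \<epsilon> pole_plus (x + 0 *\<^sub>R ?e)) * (2 * ((x - pole_plus) \<bullet> ?e))) (at 0)"
    by (intro DERIV_diff DERIV_chain2[OF DERIV_ln_divide reg_sqdist_has_real_derivative]
        reg_sqdist_pos assms)
  then show ?thesis unfolding dipole_def dipole_grad_def by (simp add: inner_axis)
qed

lemma reg_sqdist_poles:
  "reg_sqdist \<epsilon> pole_minus x = (x$1)\<^sup>2 + (x$2 + 1/2)\<^sup>2 + \<epsilon>"
  "reg_sqdist \<epsilon> pole_plus x = (x$1)\<^sup>2 + (x$2 - 1/2)\<^sup>2 + \<epsilon>"
  by (simp_all add: reg_sqdist_def power2_norm_vec2 pole_minus_def pole_plus_def axis_def)

lemma dipole_reflect_1: "dipole \<epsilon> (vector [- (x$1), x$2]) = dipole \<epsilon> x"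
  by (simp add: dipole_def reg_sqdist_poles)

lemma dipole_reflect_2: "dipole \<epsilon> (vector [x$1, - (x$2)]) = - dipole \<epsilon> x"
  by (simp add: dipole_def reg_sqdist_poles power2_eq_square algebra_simps)

lemma dipole_odd: "dipole \<epsilon> (- x) = - dipole \<epsilon> x"
  by (simp add: dipole_def reg_sqdist_poles power2_eq_square algebra_simps)

lemma weak_grad_dipole: "\<epsilon> > 0 \<Longrightarrow> weak_grad (dipole \<epsilon>) (dipole_grad \<epsilon>)"
  by (intro weak_grad_C1 continuous_on_dipole continuous_on_dipole_grad dipole_has_real_derivative)

lemma H_as_dipole: "\<epsilon> > 0 \<Longrightarrow> H_as (dipole \<epsilon>)"
  unfolding H_as_def H_za_def H1B_def
  using weak_grad_dipole L2B_continuous continuous_on_dipole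
    integral_diskB_odd[OF continuous_on_dipole dipole_odd] dipole_reflect_1 dipole_reflect_2
  by blast

lemma power2_norm_diff_le: "(norm (v - w))\<^sup>2 \<le> 2 * (norm v)\<^sup>2 + 2 * (norm w)\<^sup>2"
proof -
  have "(norm (v - w))\<^sup>2 \<le> (norm v + norm w)\<^sup>2"
    by (intro power_mono norm_triangle_ineq4) simp
  also have "\<dots> \<le> 2 * (norm v)\<^sup>2 + 2 * (norm w)\<^sup>2"
    using sum_squares_ge_zero[of "norm v - norm w" 0] by (simp add: power2_eq_square algebra_simps)
  finally show ?thesis .
qed

lemma norm_grad_ln_reg_sqdist_le:
  assumes "\<epsilon> > 0"
  shows "(norm ((2 / reg_sqdist \<epsilon> c x) *\<^sub>R (x - c)))\<^sup>2 \<le> 4 / reg_sqdist \<epsilon> c x"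
proof -
  define A where "A = reg_sqdist \<epsilon> c x"
  have A: "A > 0" "(norm (x - c))\<^sup>2 \<le> A"
    using reg_sqdist_pos[OF assms] assms by (auto simp: A_def reg_sqdist_def)
  have "(norm ((2 / A) *\<^sub>R (x - c)))\<^sup>2 = 4 / A * ((norm (x - c))\<^sup>2 / A)"
    by (simp add: power_mult_distrib power_divide power2_eq_square)
  also have "\<dots> \<le> 4 / A * 1"
    using A by (intro mult_left_mono) auto
  finally show ?thesis by (simp add: A_def)
qed

lemma dipole_grad_sq_le:
  assumes "\<epsilon> > 0"
  shows "(dipole_grad \<epsilon> 1 x)\<^sup>2 + (dipole_grad \<epsilon> 2 x)\<^sup>2
    \<le> 8 / reg_sqdist \<epsilon> pole_minus x + 8 / reg_sqdist \<epsilon> pole_plus x"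
proof -
  let ?v = "(2 / reg_sqdist \<epsilon> pole_minus x) *\<^sub>R (x - pole_minus)"
  let ?w = "(2 / reg_sqdist \<epsilon> pole_plus x) *\<^sub>R (x - pole_plus)"
  have "(dipole_grad \<epsilon> 1 x)\<^sup>2 + (dipole_grad \<epsilon> 2 x)\<^sup>2 = (norm (?v - ?w))\<^sup>2"
    by (simp add: dipole_grad_def power2_norm_vec2)
  also have "\<dots> \<le> 2 * (norm ?v)\<^sup>2 + 2 * (norm ?w)\<^sup>2" by (rule power2_norm_diff_le)
  also have "\<dots> \<le> 2 * (4 / reg_sqdist \<epsilon> pole_minus x) + 2 * (4 / reg_sqdist \<epsilon> pole_plus x)"
    by (intro add_mono mult_left_mono norm_grad_ln_reg_sqdist_le assms) auto
  finally show ?thesis by simp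
qed

lemma power_four_eq: "(4::real)^n = (2^n)\<^sup>2"
proof -
  have "(4::real)^n = (2 * 2)^n" by simp
  then show ?thesis by (simp only: power_mult_distrib power2_eq_square)
qed

definition dyadic_majorant :: "'a::real_normed_vector \<Rightarrow> nat \<Rightarrow> 'a \<Rightarrow> real" where
  "dyadic_majorant c N x = (\<Sum>j\<le>N. 4^j * indicator (ball c (2 / 2^j)) x)"

lemma dyadic_majorant_nonneg: "0 \<le> dyadic_majorant c N x"
  unfolding dyadic_majorant_def by (intro sum_nonneg) auto

lemma dyadic_majorant_ge:
  assumes eps: "\<epsilon> > 0" and x: "dist c x < 2"
  shows "min (1 / ((norm (x - c))\<^sup>2 + \<epsilon>)) (4^N) \<le> dyadic_majorant c N x"
proof (induction N)
  case 0
  then show ?case using x by (simp add: dyadic_majorant_def)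
next
  case (Suc N)
  let ?f = "1 / ((norm (x - c))\<^sup>2 + \<epsilon>)"
  have step: "dyadic_majorant c (Suc N) x
      = dyadic_majorant c N x + 4^(Suc N) * indicator (ball c (2 / 2^(Suc N))) x"
    by (simp add: dyadic_majorant_def)
  show ?case
  proof (cases "x \<in> ball c (2 / 2^(Suc N))")
    case True
    then show ?thesis using step dyadic_majorant_nonneg[of c N x] by simp
  next
    case False
    then have "1 / 2^N \<le> norm (x - c)" by (simp add: dist_norm norm_minus_commute)
    then have "(1 / 2^N)\<^sup>2 \<le> (norm (x - c))\<^sup>2" by (intro power_mono) auto
    then have "1 / 4^N \<le> (norm (x - c))\<^sup>2 + \<epsilon>"
      using eps by (simp add: power_four_eq power_divide)
    then have f_le: "?f \<le> 4^N"
      using eps by (simp add: divide_le_eq add_nonneg_pos mult.commute)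
    moreover have "(4::real)^N \<le> 4^Suc N" by simp
    ultimately have "?f \<le> 4^Suc N" by linarith
    then have "min ?f (4^Suc N) = min ?f (4^N)" using f_le by simp
    also have "\<dots> \<le> dyadic_majorant c N x" by (rule Suc.IH)
    also have "\<dots> \<le> dyadic_majorant c (Suc N) x" using step by simp
    finally show ?thesis .
  qed
qed

lemma emeasure_ball_finite: "emeasure lebesgue (ball (c::'a::euclidean_space) r) < \<infinity>"
  using lmeasurable_ball[of c r] by (simp add: fmeasurable_def)

lemma integrable_dyadic_majorant:
  "integrable lebesgue (dyadic_majorant (c::'a::euclidean_space) N)"
  unfolding dyadic_majorant_def
  by (intro Bochner_Integration.integrable_sum integrable_mult_right integrable_real_indicator
      emeasure_ball_finite) auto

lemma integral_dyadic_majorant: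
  "integral\<^sup>L lebesgue (dyadic_majorant (c::real^2) N) = 4 * pi * (N + 1)"
proof -
  have "integral\<^sup>L lebesgue (dyadic_majorant c N)
      = (\<Sum>j\<le>N. 4^j * measure lebesgue (ball c (2 / 2^j)))"
    unfolding dyadic_majorant_def
    by (subst Bochner_Integration.integral_sum)
      (auto intro!: integrable_mult_right integrable_real_indicator emeasure_ball_finite)
  also have "\<dots> = (\<Sum>j\<le>N. 4 * pi)"
  proof (rule sum.cong)
    fix j
    have "measure lebesgue (ball c (2 / 2^j)) = (2 / 2^j)^2 * pi" by (simp add: circle_area)
    then show "4^j * measure lebesgue (ball c (2 / 2^j)) = 4 * pi"
      by (simp add: power_four_eq power_divide)
  qed simp
  finally show ?thesis by simp
qed

lemma dist_axis2_diskB_lt_2: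
  assumes "\<bar>t\<bar> \<le> 1/2" and "x \<in> diskB"
  shows "dist (axis 2 t) x < 2"
proof -
  have "axis 2 t = t *\<^sub>R (axis 2 1 :: real^2)" by (simp add: vec_eq_iff axis_def)
  then have "norm (axis 2 t :: real^2) = \<bar>t\<bar>" by simp
  then show ?thesis
    using assms norm_triangle_ineq4[of "axis 2 t" x] by (simp add: diskB_def dist_norm)
qed

lemma dipole_energy_le:
  assumes eps: "\<epsilon> > 0" and N: "1 / \<epsilon> \<le> 4^N"
  shows "integral\<^sup>L (lebesgue_on diskB) (\<lambda>x. (dipole_grad \<epsilon> 1 x)\<^sup>2 + (dipole_grad \<epsilon> 2 x)\<^sup>2)
    \<le> 64 * pi * (N + 1)"
proof -
  let ?h = "\<lambda>x. (dipole_grad \<epsilon> 1 x)\<^sup>2 + (dipole_grad \<epsilon> 2 x)\<^sup>2"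
  let ?S = "\<lambda>x. 8 * dyadic_majorant pole_minus N x + 8 * dyadic_majorant pole_plus N x"
  have inv_le: "1 / reg_sqdist \<epsilon> c x \<le> dyadic_majorant c N x" if "dist c x < 2" for c x
  proof -
    have "1 / reg_sqdist \<epsilon> c x \<le> 1 / \<epsilon>"
      using eps by (intro divide_left_mono) (auto simp: reg_sqdist_def add_nonneg_pos)
    then show ?thesis
      using N dyadic_majorant_ge[OF eps that, of N] by (simp add: reg_sqdist_def)
  qed
  have "integral\<^sup>L (lebesgue_on diskB) ?h = integral\<^sup>L lebesgue (\<lambda>x. indicator diskB x *\<^sub>R ?h x)"
    by (rule integral_restrict_space) (simp add: diskB_sets)
  also have "\<dots> \<le> integral\<^sup>L lebesgue ?S"
  proof (rule integral_mono')
    show "integrable lebesgue ?S"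
      by (intro Bochner_Integration.integrable_add integrable_mult_right integrable_dyadic_majorant)
    show "0 \<le> ?S x" for x
      using dyadic_majorant_nonneg[of pole_minus N x] dyadic_majorant_nonneg[of pole_plus N x] by simp
    show "indicator diskB x *\<^sub>R ?h x \<le> ?S x" for x
    proof (cases "x \<in> diskB")
      case True
      then have "dist pole_minus x < 2" "dist pole_plus x < 2"
        unfolding pole_minus_def pole_plus_def by (auto intro: dist_axis2_diskB_lt_2)
      have "indicator diskB x *\<^sub>R ?h x
          \<le> 8 * (1 / reg_sqdist \<epsilon> pole_minus x) + 8 * (1 / reg_sqdist \<epsilon> pole_plus x)"
        using True dipole_grad_sq_le[OF eps, of x] by simp
      also have "\<dots> \<le> ?S x"
        using inv_le \<open>dist pole_minus x < 2\<close> \<open>dist pole_plus x < 2\<close>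
        by (intro add_mono mult_left_mono) auto
      finally show ?thesis .
    next
      case False
      then show ?thesis
        using dyadic_majorant_nonneg[of pole_minus N x] dyadic_majorant_nonneg[of pole_plus N x] by simp
    qed
  qed
  also have "\<dots> = 64 * pi * (N + 1)"
    by (subst Bochner_Integration.integral_add)
      (auto intro!: integrable_mult_right integrable_dyadic_majorant simp: integral_dyadic_majorant)
  finally show ?thesis .
qed

lemma sqrt_le_half: "\<epsilon> \<le> 1/4 \<Longrightarrow> sqrt \<epsilon> \<le> 1/2"
  using real_sqrt_le_mono[of \<epsilon> "1/4"] by (simp add: real_sqrt_divide)

lemma ball_pole_plus_subset_diskB:
  assumes "\<epsilon> \<le> 1/4"
  shows "ball pole_plus (sqrt \<epsilon>) \<subseteq> diskB"
proof
  fix x assume "x \<in> ball pole_plus (sqrt \<epsilon>)"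
  then have "norm (x - pole_plus) < 1/2"
    using sqrt_le_half[OF assms] by (simp add: dist_norm norm_minus_commute)
  then have "norm x < 1" using norm_triangle_ineq2[of x pole_plus] norm_pole_plus by linarith
  then show "x \<in> diskB" by (simp add: diskB_def)
qed

lemma dipole_ge_near_pole:
  assumes eps: "\<epsilon> > 0" "\<epsilon> \<le> 1/4" and x: "x \<in> ball pole_plus (sqrt \<epsilon>)"
  shows "ln (1 / (8 * \<epsilon>)) \<le> dipole \<epsilon> x"
proof -
  have near: "norm (x - pole_plus) < sqrt \<epsilon>" using x by (simp add: dist_norm norm_minus_commute)
  then have "(norm (x - pole_plus))\<^sup>2 < \<epsilon>"
    using power_strict_mono[OF near norm_ge_zero, of 2] eps(1) by simp
  then have plus: "reg_sqdist \<epsilon> pole_plus x < 2 * \<epsilon>" by (simp add: reg_sqdist_def)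
  have "1 = norm (x - pole_minus - (x - pole_plus))" using dist_poles by (simp add: dist_norm)
  also have "\<dots> \<le> norm (x - pole_minus) + norm (x - pole_plus)" by (rule norm_triangle_ineq4)
  finally have "1/2 \<le> norm (x - pole_minus)" using near sqrt_le_half[OF eps(2)] by linarith
  then have "(1/2)\<^sup>2 \<le> (norm (x - pole_minus))\<^sup>2" by (intro power_mono) auto
  then have minus: "1/4 \<le> reg_sqdist \<epsilon> pole_minus x" using eps by (simp add: reg_sqdist_def power2_eq_square)
  have "ln (1 / (8 * \<epsilon>)) = ln ((1/4) / (2 * \<epsilon>))" by simp
  also have "\<dots> = ln (1/4) - ln (2 * \<epsilon>)" using eps by (intro ln_divide_pos) auto
  also have "\<dots> \<le> dipole \<epsilon> x"
    using minus plus reg_sqdist_pos[OF eps(1)] eps(1) unfolding dipole_def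
    by (intro diff_mono ln_le_cancel_iff[THEN iffD2]) auto
  finally show ?thesis .
qed

lemma continuous_on_abs_dipole_powr:
  "\<epsilon> > 0 \<Longrightarrow> p > 0 \<Longrightarrow> continuous_on UNIV (\<lambda>x. \<bar>dipole \<epsilon> x\<bar> powr p)"
  by (intro continuous_on_powr' continuous_intros continuous_on_dipole) auto

lemma dipole_Lp_integral_ge:
  assumes eps: "\<epsilon> > 0" "\<epsilon> \<le> 1/8" and p: "p > 0"
  shows "ln (1 / (8 * \<epsilon>)) powr p * (pi * \<epsilon>)
    \<le> integral\<^sup>L (lebesgue_on diskB) (\<lambda>x. \<bar>dipole \<epsilon> x\<bar> powr p)"
proof -
  define M where "M = ln (1 / (8 * \<epsilon>))"
  have M: "0 \<le> M" unfolding M_def using eps by (simp add: field_simps)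
  let ?g = "\<lambda>x. \<bar>dipole \<epsilon> x\<bar> powr p"
  have "M powr p * (pi * \<epsilon>) = integral\<^sup>L lebesgue (\<lambda>x. M powr p * indicator (ball pole_plus (sqrt \<epsilon>)) x)"
    using eps by (simp add: circle_area emeasure_ball_finite)
  also have "\<dots> \<le> integral\<^sup>L lebesgue (\<lambda>x. indicator diskB x *\<^sub>R ?g x)"
  proof (rule integral_mono)
    show "integrable lebesgue (\<lambda>x. M powr p * indicator (ball pole_plus (sqrt \<epsilon>)) x)"
      by (intro integrable_mult_right integrable_real_indicator emeasure_ball_finite) auto
    show "integrable lebesgue (\<lambda>x. indicator diskB x *\<^sub>R ?g x)"
      using integrable_diskB_continuous[OF continuous_on_abs_dipole_powr[OF eps(1) p]] diskB_sets
      by (simp add: integrable_restrict_space)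
    show "M powr p * indicator (ball pole_plus (sqrt \<epsilon>)) x \<le> indicator diskB x *\<^sub>R ?g x" for x
    proof (cases "x \<in> ball pole_plus (sqrt \<epsilon>)")
      case True
      moreover have "\<epsilon> \<le> 1/4" using eps by simp
      ultimately have "x \<in> diskB" using ball_pole_plus_subset_diskB by blast
      moreover have "M \<le> \<bar>dipole \<epsilon> x\<bar>"
        using dipole_ge_near_pole[OF eps(1) _ True] eps unfolding M_def by simp
      ultimately show ?thesis using True M p by (simp add: powr_mono2)
    qed simp
  qed
  also have "\<dots> = integral\<^sup>L (lebesgue_on diskB) ?g"
    by (rule integral_restrict_space[symmetric]) (simp add: diskB_sets)
  finally show ?thesis unfolding M_def .
qed

definition rayleigh_quotient :: "real \<Rightarrow> (real^2 \<Rightarrow> real) \<Rightarrow> (2 \<Rightarrow> real^2 \<Rightarrow> real) \<Rightarrow> real" where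
  "rayleigh_quotient p u g =
     integral\<^sup>L (lebesgue_on diskB) (\<lambda>x. (g 1 x)\<^sup>2 + (g 2 x)\<^sup>2)
     / (integral\<^sup>L (lebesgue_on diskB) (\<lambda>x. \<bar>u x\<bar> powr p)) powr (2 / p)"

lemma rayleigh_quotient_nonneg: "0 \<le> rayleigh_quotient p u g"
  unfolding rayleigh_quotient_def by (intro divide_nonneg_nonneg integral_nonneg_AE AE_I2) auto

lemma Lambda'_bounded_by_rayleigh_quotient:
  assumes "H_as u" "weak_grad u g" "\<not> (AE x in lebesgue_on diskB. u x = 0)"
  shows "0 \<le> Lambda' p \<and> Lambda' p \<le> rayleigh_quotient p u g"
proof -
  define S where "S = {rayleigh_quotient p u g | u g.
    H_as u \<and> weak_grad u g \<and> \<not> (AE x in lebesgue_on diskB. u x = 0)}"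
  have Lambda': "Lambda' p = Inf S"
    unfolding Lambda'_def S_def rayleigh_quotient_def ..
  have mem: "rayleigh_quotient p u g \<in> S" unfolding S_def using assms by blast
  have "Inf S \<le> rayleigh_quotient p u g"
    using mem rayleigh_quotient_nonneg by (intro cInf_lower bdd_belowI[of _ 0]) (auto simp: S_def)
  moreover have "0 \<le> Inf S"
    using mem by (intro cInf_greatest) (auto simp: S_def rayleigh_quotient_nonneg)
  ultimately show ?thesis unfolding Lambda' by simp
qed

lemma not_AE_zero_if_integral_powr_pos:
  fixes u :: "'a \<Rightarrow> real"
  assumes "0 < integral\<^sup>L M (\<lambda>x. \<bar>u x\<bar> powr p)"
  shows "\<not> (AE x in M. u x = 0)"
proof
  assume "AE x in M. u x = 0"
  then have "AE x in M. \<bar>u x\<bar> powr p = 0" by eventually_elim simp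
  then show False using assms integral_eq_zero_AE by fastforce
qed

lemma dipole_rayleigh_quotient_le:
  assumes eps: "\<epsilon> > 0" "\<epsilon> < 1/8" and N: "1 / \<epsilon> \<le> 4^N" and p: "p > 0"
  shows "\<not> (AE x in lebesgue_on diskB. dipole \<epsilon> x = 0)"
    and "rayleigh_quotient p (dipole \<epsilon>) (dipole_grad \<epsilon>)
      \<le> 64 * pi * (N + 1) / ((ln (1 / (8 * \<epsilon>)))\<^sup>2 * (pi * \<epsilon>) powr (2 / p))"
proof -
  define M where "M = ln (1 / (8 * \<epsilon>))"
  define D where "D = integral\<^sup>L (lebesgue_on diskB) (\<lambda>x. \<bar>dipole \<epsilon> x\<bar> powr p)"
  have "M > 0" using eps by (simp add: M_def field_simps)
  then have low_pos: "0 < M powr p * (pi * \<epsilon>)" using eps by simp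
  have D: "M powr p * (pi * \<epsilon>) \<le> D"
    unfolding D_def M_def using eps p by (intro dipole_Lp_integral_ge) auto
  then show "\<not> (AE x in lebesgue_on diskB. dipole \<epsilon> x = 0)"
    using low_pos by (intro not_AE_zero_if_integral_powr_pos[of _ _ p]) (simp add: D_def)
  have "M\<^sup>2 * (pi * \<epsilon>) powr (2 / p) = (M powr p * (pi * \<epsilon>)) powr (2 / p)"
    using \<open>M > 0\<close> eps p by (simp add: powr_mult powr_powr powr_numeral)
  also have "\<dots> \<le> D powr (2 / p)" using D low_pos p by (intro powr_mono2) auto
  finally have "M\<^sup>2 * (pi * \<epsilon>) powr (2 / p) \<le> D powr (2 / p)" .
  moreover have "0 < M\<^sup>2 * (pi * \<epsilon>) powr (2 / p)" using \<open>M > 0\<close> eps by simp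
  ultimately show "rayleigh_quotient p (dipole \<epsilon>) (dipole_grad \<epsilon>)
      \<le> 64 * pi * (N + 1) / ((ln (1 / (8 * \<epsilon>)))\<^sup>2 * (pi * \<epsilon>) powr (2 / p))"
    unfolding rayleigh_quotient_def M_def[symmetric] D_def[symmetric]
    using dipole_energy_le[OF eps(1) N] by (intro frac_le) (auto intro: integral_nonneg_AE)
qed

lemma ln_four_power_div_8: "ln (4^N / 8) = (2 * real N - 3) * ln (2::real)"
proof -
  have ln4: "ln (4::real) = 2 * ln 2" and ln8: "ln (8::real) = 3 * ln 2"
    using ln_realpow[of 2 2] ln_realpow[of 2 3] by simp_all
  have "ln ((4::real)^N / 8) = ln (4^N) - ln 8" by (rule ln_divide_pos) auto
  then show ?thesis by (simp add: ln_realpow ln4 ln8 algebra_simps)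
qed

lemma inverse_four_power_powr_ge:
  assumes "p > 0" and "real N \<le> 2 * p"
  shows "1/256 \<le> (1 / 4^N) powr (2 / p)"
proof -
  have "(1::real) / 256 = 4 powr (-4)" by (simp add: powr_minus powr_numeral)
  also have "\<dots> \<le> 4 powr (- (2 * real N / p))"
    using assms by (intro powr_mono) (auto simp: field_simps)
  also have "\<dots> = (4 powr (- real N)) powr (2 / p)" by (simp add: powr_powr mult.commute)
  also have "4 powr (- real N) = 1 / 4^N" by (simp add: powr_minus powr_realpow divide_inverse)
  finally show ?thesis .
qed

lemma Lambda'_bounded_by_inverse:
  assumes p: "p \<ge> 3"
  shows "0 \<le> Lambda' p \<and> Lambda' p \<le> 32768 * pi / (ln 2)\<^sup>2 / p"
proof -
  define N where "N = nat \<lceil>p\<rceil>"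
  have Np: "p \<le> real N" "real N \<le> p + 1" and N3: "real N \<ge> 3" unfolding N_def using p by linarith+
  define \<epsilon> :: real where "\<epsilon> = 1 / 4^N"
  have "(4::real)^3 \<le> 4^N" using N3 by (intro power_increasing) auto
  then have eps: "\<epsilon> > 0" "\<epsilon> < 1/8" "1 / \<epsilon> \<le> 4^N" by (auto simp: \<epsilon>_def field_simps)
  note dipole = dipole_rayleigh_quotient_le[OF eps, of p]
  have "0 \<le> Lambda' p \<and> Lambda' p \<le> rayleigh_quotient p (dipole \<epsilon>) (dipole_grad \<epsilon>)"
    using p eps by (intro Lambda'_bounded_by_rayleigh_quotient H_as_dipole weak_grad_dipole dipole(1)) auto
  moreover have "rayleigh_quotient p (dipole \<epsilon>) (dipole_grad \<epsilon>)
      \<le> 64 * pi * (N + 1) / ((ln (1 / (8 * \<epsilon>)))\<^sup>2 * (pi * \<epsilon>) powr (2 / p))"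
    using p by (intro dipole(2)) auto
  moreover have "\<dots> \<le> (64 * pi * (2 * N)) / ((N * ln 2)\<^sup>2 * (1/256))"
  proof (intro frac_le mult_mono)
    have "real N * ln 2 \<le> (2 * real N - 3) * ln 2" using N3 by (intro mult_right_mono) auto
    then show "(N * ln 2)\<^sup>2 \<le> (ln (1 / (8 * \<epsilon>)))\<^sup>2"
      using N3 ln_four_power_div_8[of N] by (intro power_mono) (auto simp: \<epsilon>_def)
    have "(1 / 4^N) powr (2 / p) \<le> (pi * \<epsilon>) powr (2 / p)"
      using p pi_gt3 unfolding \<epsilon>_def by (intro powr_mono2) (auto intro: divide_right_mono)
    then show "1/256 \<le> (pi * \<epsilon>) powr (2 / p)"
      using inverse_four_power_powr_ge[of p N] p Np by linarith
  qed (use N3 in auto)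
  moreover have "(64 * pi * (2 * N)) / ((N * ln 2)\<^sup>2 * (1/256)) = 32768 * pi / (ln 2)\<^sup>2 / N"
    using N3 by (simp add: power2_eq_square field_simps)
  moreover have "\<dots> \<le> 32768 * pi / (ln 2)\<^sup>2 / p"
    using Np p by (intro divide_left_mono) auto
  ultimately show ?thesis by linarith
qed

theorem corollary7p3:
  shows "(Lambda' \<longlongrightarrow> 0) at_top"
proof (rule tendsto_sandwich[of "\<lambda>_. 0" _ _ "\<lambda>p. 32768 * pi / (ln 2)\<^sup>2 / p"])
  show "\<forall>\<^sub>F p in at_top. 0 \<le> Lambda' p"
    using eventually_ge_at_top[of "3::real"] by eventually_elim (use Lambda'_bounded_by_inverse in blast)
  show "\<forall>\<^sub>F p in at_top. Lambda' p \<le> 32768 * pi / (ln 2)\<^sup>2 / p"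
    using eventually_ge_at_top[of "3::real"] by eventually_elim (use Lambda'_bounded_by_inverse in blast)
  show "((\<lambda>p::real. 32768 * pi / (ln 2)\<^sup>2 / p) \<longlongrightarrow> 0) at_top"
    by (intro tendsto_divide_0[OF tendsto_const] filterlim_at_top_imp_at_infinity filterlim_ident)
qed simp

end
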